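(* Let $\mathbf S$ be an SRRW in $\mathbb{R}^d$ with parameter $\alpha\in[0,1)$ and step distribution $\mu\ne\delta_{\mathbf 0}$. For $R>0$ let $\zeta_R:=\inf\{n\in\mathbb N:\|\mathbf S_n\|\ge R\}$. Then $\mathbb E\zeta_R<\infty$ for every $R>0$.
   Context: SRRW: $\mu$ a probability measure on $\mathbb{R}^d$, $\alpha\in[0,1]$; $(\xi_n)_{n\ge2}$ i.i.d. Bernoulli($\alpha$), $(U[n])_{n\ge1}$ independent with $U[n]$ uniform on $\{1,\dots,n\}$. Sample $\mathbf X_1\sim\mu$; for $n\ge1$, if $\xi_{n+1}=1$ set $\mathbf X_{n+1}=\mathbf X_{U[n]}$, else sample $\mathbf X_{n+1}\sim\mu$ independently. $\mathbf S_0=\mathbf 0$, $\mathbf S_n=\sum_{i\le n}\mathbf X_i$. *)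

theory Defs
  imports "HOL-Probability.Probability"
begin

text \<open>Coordinate n of \<omega> is the triple
  (xi_n, U[n], Y_n): xi_n ~ Bernoulli(alpha), U[n] uniform on {1..n} (for n = 0 a dummy
  uniform on {1}, never used), Y_n ~ mu a fresh step; all coordinates independent.\<close>

definition srrw_space :: "real \<Rightarrow> 'a::euclidean_space measure \<Rightarrow> (nat \<Rightarrow> bool \<times> nat \<times> 'a) measure" where
  "srrw_space \<alpha> \<mu> = (\<Pi>\<^sub>M n\<in>UNIV. measure_pmf (bernoulli_pmf \<alpha>) \<Otimes>\<^sub>M
       (measure_pmf (pmf_of_set {1..max 1 n}) \<Otimes>\<^sub>M \<mu>))"

text \<open>srrw_path \<omega> n = [X_1, ..., X_n]. X_1 = Y_1; for n \<ge> 1,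
  X_{n+1} = X_{U[n]} if xi_{n+1} = 1, else X_{n+1} = Y_{n+1}.\<close>

fun srrw_path :: "(nat \<Rightarrow> bool \<times> nat \<times> 'a) \<Rightarrow> nat \<Rightarrow> 'a list" where
  "srrw_path \<omega> 0 = []"
| "srrw_path \<omega> (Suc n) = srrw_path \<omega> n @
     [if 1 \<le> n \<and> fst (\<omega> (Suc n)) then srrw_path \<omega> n ! (fst (snd (\<omega> n)) - 1)
      else snd (snd (\<omega> (Suc n)))]"

definition srrw_S :: "(nat \<Rightarrow> bool \<times> nat \<times> 'a::euclidean_space) \<Rightarrow> nat \<Rightarrow> 'a" where
  "srrw_S \<omega> n = sum_list (srrw_path \<omega> n)"

definition srrw_exit_time :: "real \<Rightarrow> (nat \<Rightarrow> bool \<times> nat \<times> 'a::euclidean_space) \<Rightarrow> ennreal" where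
  "srrw_exit_time R \<omega> =
     (if \<exists>n. norm (srrw_S \<omega> n) \<ge> R then of_nat (LEAST n. norm (srrw_S \<omega> n) \<ge> R) else \<infinity>)"

end

theory Submission
  imports Defs
begin

(* Since \<mu> is not the point mass at 0, some c with norm c \<le> 1 and some \<epsilon> > 0 satisfy
   \<mu>{y. y \<bullet> c > \<epsilon>} > 0.  Hence every step is, independently of all others and with
   probability q = (1 - \<alpha>) \<mu>{y. y \<bullet> c > \<epsilon>} > 0, a fresh step raising S \<bullet> c by more than \<epsilon>.
   A run of K such steps with K \<epsilon> > 2 R makes norm S \<ge> R at its start or at its end.
   Cutting time into blocks of length K, the blocks consisting only of such steps occur
   independently with probability q^K, so \<zeta>_R is at most K times a geometric waiting time
   and E \<zeta>_R \<le> K / q^K. *)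

lemma (in prob_space) eq_return_if_AE_eq:
  assumes sets_eq: "sets M = sets N" and ae: "AE x in M. x = a"
  shows "M = return N a"
proof (rule measure_eqI)
  show "sets M = sets (return N a)"
    using sets_eq by simp
next
  fix A assume A: "A \<in> sets M"
  show "emeasure M A = emeasure (return N a) A"
  proof (cases "a \<in> A")
    case True
    then have "emeasure M A = 1"
      using A ae by (intro emeasure_eq_1_AE) auto
    then show ?thesis
      using True A sets_eq by simp
  next
    case False
    have "AE x in M. x \<notin> A"
      using ae False by auto
    then have "emeasure M A = 0"
      using A sets.sets_into_space[OF A] by (subst AE_iff_measurable[symmetric]) auto
    then show ?thesis
      using False A sets_eq by simp
  qed
qed

lemma exists_direction_with_positive_mass:
  fixes \<mu> :: "'a::euclidean_space measure"
  assumes "prob_space \<mu>" and sets_\<mu>: "sets \<mu> = sets borel" and "\<mu> \<noteq> return borel 0"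
  shows "\<exists>c \<epsilon>. norm c \<le> 1 \<and> 0 < \<epsilon> \<and> 0 < measure \<mu> {y. \<epsilon> < y \<bullet> c}"
proof (rule ccontr)
  interpret prob_space \<mu> by fact
  assume no_direction: "\<not> ?thesis"
  have null: "{y. \<epsilon> < y \<bullet> c} \<in> null_sets \<mu>" if "norm c \<le> 1" "0 < \<epsilon>" for c \<epsilon>
  proof -
    have "\<not> 0 < measure \<mu> {y. \<epsilon> < y \<bullet> c}"
      using that no_direction by blast
    then have "measure \<mu> {y. \<epsilon> < y \<bullet> c} = 0"
      using measure_nonneg[of \<mu> "{y. \<epsilon> < y \<bullet> c}"] by linarith
    then show ?thesis
      by (simp add: null_sets_def emeasure_eq_measure sets_\<mu>)
  qed
  define D where "D = ((Basis :: 'a set) \<union> uminus ` Basis) \<times> (UNIV :: nat set)"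
  define half where "half = (\<lambda>(c, n). {y::'a. inverse (real (Suc n)) < y \<bullet> c})"
  have cover: "{y. y \<noteq> 0} \<subseteq> \<Union>(half ` D)"
  proof
    fix y :: 'a assume "y \<in> {y. y \<noteq> 0}"
    then obtain b where b: "b \<in> Basis" "y \<bullet> b \<noteq> 0"
      using euclidean_all_zero_iff by auto
    then obtain n where n: "inverse (real (Suc n)) < \<bar>y \<bullet> b\<bar>"
      using reals_Archimedean by (metis zero_less_abs_iff)
    have "\<bar>y \<bullet> b\<bar> = y \<bullet> (sgn (y \<bullet> b) *\<^sub>R b)"
      by (simp add: abs_if sgn_if)
    moreover have "(sgn (y \<bullet> b) *\<^sub>R b, n) \<in> D"
      using b unfolding D_def by (cases "0 < y \<bullet> b") auto
    ultimately have "y \<in> half (sgn (y \<bullet> b) *\<^sub>R b, n)"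
      using n unfolding half_def by simp
    then show "y \<in> \<Union>(half ` D)"
      using \<open>(sgn (y \<bullet> b) *\<^sub>R b, n) \<in> D\<close> by blast
  qed
  have "countable D"
    unfolding D_def by (intro countable_SIGMA) (simp_all add: countable_finite)
  moreover have "half d \<in> null_sets \<mu>" if "d \<in> D" for d
    using that unfolding D_def half_def by (auto intro!: null simp: norm_Basis)
  ultimately have "\<Union>(half ` D) \<in> null_sets \<mu>"
    by (rule null_sets_UN')
  with cover have "AE y in \<mu>. y = 0"
    by (intro AE_I') auto
  then have "\<mu> = return borel 0"
    by (rule eq_return_if_AE_eq[OF sets_\<mu>])
  with assms(3) show False ..
qed

lemma suminf_prod_failures:
  "(\<Sum>j. \<Prod>i<j. if P i then 0 else 1 :: ennreal) = (if \<exists>i. P i then of_nat (Suc (LEAST i. P i)) else \<infinity>)"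
proof (cases "\<exists>i. P i")
  case True
  define J where "J = (LEAST i. P i)"
  have "P J"
    unfolding J_def using True by (rule LeastI_ex)
  have not_P: "\<not> P i" if "i < J" for i
    using that unfolding J_def by (rule not_less_Least)
  have "(\<Prod>i<j. if P i then 0 else 1 :: ennreal) = (if j \<le> J then 1 else 0)" for j
  proof (cases "j \<le> J")
    case True
    with not_P show ?thesis by (intro trans[OF prod.neutral]) auto
  next
    case False
    with \<open>P J\<close> show ?thesis by (intro trans[OF prod_zero]) force+
  qed
  then have "(\<Sum>j. \<Prod>i<j. if P i then 0 else 1 :: ennreal) = (\<Sum>j. if j \<le> J then 1 else 0)"
    by simp
  also have "\<dots> = (\<Sum>j\<le>J. 1)"
    by (subst suminf_finite[of "{..J}"]) auto
  finally show ?thesis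
    using True by (simp add: J_def)
next
  case False
  have "(\<Sum>j. ennreal ((\<lambda>_. 1) j)) = top"
    by (rule summable_iff_suminf_neq_top) (auto simp: summable_const_iff)
  with False show ?thesis
    by simp
qed

lemma (in prob_space) nn_integral_suminf_prod_indep_le:
  fixes F :: "nat \<Rightarrow> 'a \<Rightarrow> ennreal"
  assumes indep: "indep_vars (\<lambda>_. borel) F UNIV"
    and le: "\<And>i. (\<integral>\<^sup>+\<omega>. F i \<omega> \<partial>M) \<le> ennreal r" and "0 \<le> r" "r < 1"
  shows "(\<integral>\<^sup>+\<omega>. (\<Sum>j. \<Prod>i<j. F i \<omega>) \<partial>M) \<le> ennreal (1 / (1 - r))"
proof -
  have [measurable]: "F i \<in> borel_measurable M" for i
    using indep by (auto simp: indep_vars_def)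
  have "(\<integral>\<^sup>+\<omega>. (\<Sum>j. \<Prod>i<j. F i \<omega>) \<partial>M) =
      (\<Sum>j. \<integral>\<^sup>+\<omega>. (\<Prod>i<j. F i \<omega>) \<partial>M)"
    by (rule nn_integral_suminf) measurable
  also have "\<dots> = (\<Sum>j. \<Prod>i<j. \<integral>\<^sup>+\<omega>. F i \<omega> \<partial>M)"
    by (intro suminf_cong indep_vars_nn_integral) (auto intro: indep_vars_subset[OF indep])
  also have "\<dots> \<le> (\<Sum>j. \<Prod>i<j. ennreal r)"
    using le by (intro suminf_le prod_mono_ennreal) auto
  also have "\<dots> = (\<Sum>j. ennreal (r ^ j))"
    using \<open>0 \<le> r\<close> by (simp add: ennreal_power)
  also have "\<dots> = ennreal (1 / (1 - r))"
    using assms by (simp add: suminf_ennreal2 summable_geometric suminf_geometric)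
  finally show ?thesis .
qed

lemma (in product_prob_space) indep_vars_coordinates: "P.indep_vars M (\<lambda>i \<omega>. \<omega> i) I"
proof (cases "I = {}")
  case True
  then show ?thesis
    unfolding P.indep_vars_def P.indep_sets_def by simp
next
  case False
  have "distr (PiM I M) (PiM I M) (\<lambda>\<omega>. \<lambda>i\<in>I. \<omega> i) =
      distr (PiM I M) (PiM I M) (\<lambda>\<omega>. \<omega>)"
    by (intro distr_cong) (auto simp: space_PiM)
  also have "\<dots> = PiM I (\<lambda>i. distr (PiM I M) (M i) (\<lambda>\<omega>. \<omega> i))"
    by (simp add: PiM_component cong: PiM_cong)
  finally show ?thesis
    using False by (subst P.indep_vars_iff_distr_eq_PiM') auto
qed

lemma (in product_prob_space) indep_vars_block_failures:
  assumes "disjoint_family J" and "\<And>i. J i \<subseteq> I" and "\<And>i. finite (J i)"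
    and "\<And>m. m \<in> I \<Longrightarrow> G m \<in> sets (M m)"
  shows "P.indep_vars (\<lambda>_. borel) (\<lambda>i \<omega>. if \<forall>m\<in>J i. \<omega> m \<in> G m then 0 else 1 :: ennreal) UNIV"
proof -
  have "P.indep_vars (\<lambda>i. PiM (J i) M) (\<lambda>i \<omega>. restrict (\<lambda>m. \<omega> m) (J i)) UNIV"
    using assms(1,2) by (intro P.indep_vars_restrict[OF indep_vars_coordinates]) auto
  moreover have
    "(\<lambda>x. if \<forall>m\<in>J i. x m \<in> G m then 0 else 1 :: ennreal) \<in> borel_measurable (PiM (J i) M)" for i
    using assms(2-4) by measurable (use assms(2) in \<open>auto intro: measurable_component_singleton\<close>)
  ultimately have "P.indep_vars (\<lambda>_. borel)
      (\<lambda>i \<omega>. if \<forall>m\<in>J i. restrict (\<lambda>m. \<omega> m) (J i) m \<in> G m then 0 else 1 :: ennreal) UNIV"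
    by (rule P.indep_vars_compose2)
  then show ?thesis
    by simp
qed

lemma (in product_prob_space) nn_integral_block_failure:
  assumes "J \<subseteq> I" and "finite J" and "\<And>m. m \<in> J \<Longrightarrow> G m \<in> sets (M m)"
  shows "(\<integral>\<^sup>+\<omega>. (if \<forall>m\<in>J. \<omega> m \<in> G m then 0 else 1 :: ennreal) \<partial>PiM I M) =
    1 - (\<Prod>m\<in>J. emeasure (M m) (G m))"
proof -
  define E where "E = {\<omega> \<in> space (PiM I M). \<forall>m\<in>J. \<omega> m \<in> G m}"
  have "E = prod_emb I M J (Pi\<^sub>E J G)"
    unfolding E_def prod_emb_def using assms(1) by (auto simp: space_PiM)
  then have E: "E \<in> sets (PiM I M)"
    using assms by (auto intro!: sets_PiM_I)
  have "(\<integral>\<^sup>+\<omega>. (if \<forall>m\<in>J. \<omega> m \<in> G m then 0 else 1 :: ennreal) \<partial>PiM I M) =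
      (\<integral>\<^sup>+\<omega>. indicator (space (PiM I M) - E) \<omega> \<partial>PiM I M)"
    by (intro nn_integral_cong) (auto simp: E_def split: split_indicator)
  also have "\<dots> = 1 - emeasure (PiM I M) E"
    using E by (simp add: emeasure_compl P.emeasure_space_1)
  also have "emeasure (PiM I M) E = (\<Prod>m\<in>J. emeasure (M m) (G m))"
    unfolding E_def using assms by (rule emeasure_PiM_Collect)
  finally show ?thesis .
qed

lemma (in product_prob_space) nn_integral_first_block_le:
  assumes "disjoint_family J" and "\<And>i. J i \<subseteq> I" and "\<And>i. finite (J i)"
    and "\<And>m. m \<in> I \<Longrightarrow> G m \<in> sets (M m)"
    and "0 < p" and p_le: "\<And>i. ennreal p \<le> (\<Prod>m\<in>J i. emeasure (M m) (G m))"
  shows "(\<integral>\<^sup>+\<omega>. (\<Sum>j. \<Prod>i<j. if \<forall>m\<in>J i. \<omega> m \<in> G m then 0 else 1) \<partial>PiM I M) \<le>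
    ennreal (1 / p)"
proof -
  have "ennreal p \<le> (\<Prod>m\<in>J 0. 1)"
    using p_le[of 0] by (rule order_trans) (intro prod_mono_ennreal M.emeasure_le_1)
  then have "p \<le> 1"
    by simp
  have "(\<integral>\<^sup>+\<omega>. (if \<forall>m\<in>J i. \<omega> m \<in> G m then 0 else 1) \<partial>PiM I M) \<le> ennreal (1 - p)" for i
  proof -
    have "(\<integral>\<^sup>+\<omega>. (if \<forall>m\<in>J i. \<omega> m \<in> G m then 0 else 1) \<partial>PiM I M) =
        1 - (\<Prod>m\<in>J i. emeasure (M m) (G m))"
      using assms(2-4) by (intro nn_integral_block_failure) auto
    also have "\<dots> \<le> 1 - ennreal p"
      using p_le by (rule ennreal_minus_mono[OF order_refl])
    finally show ?thesis
      using \<open>0 < p\<close> by (simp add: ennreal_minus flip: ennreal_1)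
  qed
  from P.nn_integral_suminf_prod_indep_le[OF indep_vars_block_failures[OF assms(1-4)] this]
  show ?thesis
    using \<open>0 < p\<close> \<open>p \<le> 1\<close> by simp
qed

lemma disjoint_family_blocks: "disjoint_family (\<lambda>i::nat. {i*K<..i*K+K})"
proof (unfold disjoint_family_on_def, intro ballI impI)
  fix i j :: nat assume "i \<noteq> j"
  then consider "i < j" | "j < i" by linarith
  then show "{i*K<..i*K+K} \<inter> {j*K<..j*K+K} = {}"
  proof cases
    case 1
    then have "i*K + K \<le> j*K" by (metis Suc_leI add.commute mult_Suc mult_le_mono1)
    then show ?thesis by auto
  next
    case 2
    then have "j*K + K \<le> i*K" by (metis Suc_leI add.commute mult_Suc mult_le_mono1)
    then show ?thesis by auto
  qed
qed

definition srrw_push :: "'a::real_inner \<Rightarrow> real \<Rightarrow> (bool \<times> nat \<times> 'a) set" where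
  "srrw_push c \<epsilon> = {x. \<not> fst x \<and> \<epsilon> < snd (snd x) \<bullet> c}"

lemma srrw_S_Suc_fresh:
  assumes "\<not> fst (\<omega> (Suc n))"
  shows "srrw_S \<omega> (Suc n) = srrw_S \<omega> n + snd (snd (\<omega> (Suc n)))"
  using assms by (simp add: srrw_S_def)

lemma srrw_S_inner_run_ge:
  assumes "\<forall>m\<in>{a<..a+k}. \<omega> m \<in> srrw_push c \<epsilon>"
  shows "srrw_S \<omega> a \<bullet> c + real k * \<epsilon> \<le> srrw_S \<omega> (a+k) \<bullet> c"
  using assms
proof (induction k)
  case 0
  then show ?case by simp
next
  case (Suc k)
  then have push: "\<omega> (Suc (a+k)) \<in> srrw_push c \<epsilon>"
    and IH: "srrw_S \<omega> a \<bullet> c + real k * \<epsilon> \<le> srrw_S \<omega> (a+k) \<bullet> c"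
    by auto
  then have "srrw_S \<omega> (Suc (a+k)) = srrw_S \<omega> (a+k) + snd (snd (\<omega> (Suc (a+k))))"
    by (intro srrw_S_Suc_fresh) (simp add: srrw_push_def)
  with push IH show ?case
    by (simp add: srrw_push_def inner_add_left algebra_simps)
qed

lemma srrw_exit_time_le:
  assumes "R \<le> norm (srrw_S \<omega> n)"
  shows "srrw_exit_time R \<omega> \<le> of_nat n"
  using assms by (auto simp: srrw_exit_time_def intro: Least_le)

lemma srrw_exit_time_le_run:
  assumes run: "\<forall>m\<in>{a<..a+k}. \<omega> m \<in> srrw_push c \<epsilon>"
    and "2 * R < real k * \<epsilon>" and "norm c \<le> 1"
  shows "srrw_exit_time R \<omega> \<le> of_nat (a+k)"
proof -
  have inner_le: "\<bar>x \<bullet> c\<bar> \<le> norm x" for x :: 'a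
    using Cauchy_Schwarz_ineq2[of x c] \<open>norm c \<le> 1\<close> mult_left_le[of "norm c" "norm x"] by simp
  have "R \<le> norm (srrw_S \<omega> a) \<or> R \<le> norm (srrw_S \<omega> (a+k))"
    using inner_le[of "srrw_S \<omega> a"] inner_le[of "srrw_S \<omega> (a+k)"] srrw_S_inner_run_ge[OF run]
      assms(2) by linarith
  then show ?thesis
    by (elim disjE) (auto dest!: srrw_exit_time_le intro: order_trans)
qed

lemma srrw_exit_time_le_blocks:
  assumes "2 * R < real K * \<epsilon>" and "norm c \<le> 1"
  shows "srrw_exit_time R \<omega> \<le>
    of_nat K * (\<Sum>j. \<Prod>i<j. if \<forall>m\<in>{i*K<..i*K+K}. \<omega> m \<in> srrw_push c \<epsilon> then 0 else 1)"
proof (cases "\<exists>i. \<forall>m\<in>{i*K<..i*K+K}. \<omega> m \<in> srrw_push c \<epsilon>")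
  case True
  define J where "J = (LEAST i. \<forall>m\<in>{i*K<..i*K+K}. \<omega> m \<in> srrw_push c \<epsilon>)"
  have "\<forall>m\<in>{J*K<..J*K+K}. \<omega> m \<in> srrw_push c \<epsilon>"
    unfolding J_def using True by (rule LeastI_ex)
  then have "srrw_exit_time R \<omega> \<le> of_nat (J*K+K)"
    using assms by (rule srrw_exit_time_le_run)
  also have "\<dots> = of_nat K * of_nat (Suc J)"
    by (simp add: algebra_simps)
  finally show ?thesis
    using True by (simp add: suminf_prod_failures J_def)
next
  case no_block: False
  show ?thesis
  proof (cases "K = 0")
    case True
    then have "srrw_exit_time R \<omega> \<le> 0"
      using assms(1) srrw_exit_time_le[of R \<omega> 0] by (simp add: srrw_S_def)
    then show ?thesis
      by (simp add: order_trans)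
  next
    case False
    have "(\<Sum>j. \<Prod>i<j. if \<forall>m\<in>{i*K<..i*K+K}. \<omega> m \<in> srrw_push c \<epsilon> then 0 else 1 :: ennreal) =
        \<infinity>"
      using no_block by (simp add: suminf_prod_failures)
    with False show ?thesis
      by (simp add: ennreal_mult_top)
  qed
qed

lemma srrw_push_eq_Times: "srrw_push c \<epsilon> = {False} \<times> UNIV \<times> {y. \<epsilon> < y \<bullet> c}"
  by (auto simp: srrw_push_def)

lemma
  fixes \<mu> :: "'a::euclidean_space measure" and p :: "nat pmf" and \<alpha> :: real
  assumes "prob_space \<mu>" and sets_\<mu>: "sets \<mu> = sets borel" and "0 \<le> \<alpha>" and "\<alpha> \<le> 1"
  defines "N \<equiv> measure_pmf (bernoulli_pmf \<alpha>) \<Otimes>\<^sub>M (measure_pmf p \<Otimes>\<^sub>M \<mu>)"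
  shows sets_srrw_push: "srrw_push c \<epsilon> \<in> sets N"
    and emeasure_srrw_push: "emeasure N (srrw_push c \<epsilon>) = ennreal (1 - \<alpha>) * emeasure \<mu> {y. \<epsilon> < y \<bullet> c}"
proof -
  interpret \<mu>: prob_space \<mu> by fact
  interpret p\<mu>: prob_space "measure_pmf p \<Otimes>\<^sub>M \<mu>"
    by (intro prob_space_pair prob_space_measure_pmf \<mu>.prob_space_axioms)
  have B: "{y. \<epsilon> < y \<bullet> c} \<in> sets \<mu>"
    unfolding sets_\<mu> by measurable
  then show "srrw_push c \<epsilon> \<in> sets N"
    unfolding srrw_push_eq_Times N_def by (intro pair_measureI) auto
  have "emeasure N (srrw_push c \<epsilon>) =
      emeasure (measure_pmf (bernoulli_pmf \<alpha>)) {False} *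
      emeasure (measure_pmf p \<Otimes>\<^sub>M \<mu>) (UNIV \<times> {y. \<epsilon> < y \<bullet> c})"
    unfolding srrw_push_eq_Times N_def using B by (intro p\<mu>.emeasure_pair_measure_Times) auto
  also have "emeasure (measure_pmf p \<Otimes>\<^sub>M \<mu>) (UNIV \<times> {y. \<epsilon> < y \<bullet> c}) = emeasure \<mu> {y. \<epsilon> < y \<bullet> c}"
    using B \<mu>.emeasure_pair_measure_Times[of UNIV "measure_pmf p"] by simp
  finally show "emeasure N (srrw_push c \<epsilon>) = ennreal (1 - \<alpha>) * emeasure \<mu> {y. \<epsilon> < y \<bullet> c}"
    using assms(3,4) by (simp add: emeasure_pmf_single)
qed

lemma product_prob_space_srrw_coordinates:
  assumes "prob_space \<mu>"
  shows "product_prob_space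
    (\<lambda>n. measure_pmf (bernoulli_pmf \<alpha>) \<Otimes>\<^sub>M (measure_pmf (pmf_of_set {1..max 1 n}) \<Otimes>\<^sub>M \<mu>))"
proof -
  have "prob_space
      (measure_pmf (bernoulli_pmf \<alpha>) \<Otimes>\<^sub>M (measure_pmf (pmf_of_set {1..max 1 n}) \<Otimes>\<^sub>M \<mu>))" for n
    by (intro prob_space_pair prob_space_measure_pmf assms)
  then show ?thesis
    unfolding product_prob_space_def product_prob_space_axioms_def product_sigma_finite_def
    by (blast intro: prob_space_imp_sigma_finite)
qed

lemma nn_integral_srrw_exit_time_le:
  fixes \<mu> :: "'a::euclidean_space measure"
  assumes "prob_space \<mu>" and "sets \<mu> = sets borel" and "0 \<le> \<alpha>" and "\<alpha> < 1"
    and "norm c \<le> 1" and mass: "0 < measure \<mu> {y. \<epsilon> < y \<bullet> c}" and "2 * R < real K * \<epsilon>"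
  shows "(\<integral>\<^sup>+\<omega>. srrw_exit_time R \<omega> \<partial>srrw_space \<alpha> \<mu>) \<le>
    of_nat K * ennreal (1 / ((1 - \<alpha>) * measure \<mu> {y. \<epsilon> < y \<bullet> c}) ^ K)"
proof -
  interpret \<mu>: prob_space \<mu> by fact
  define M where "M n =
    measure_pmf (bernoulli_pmf \<alpha>) \<Otimes>\<^sub>M (measure_pmf (pmf_of_set {1..max 1 n}) \<Otimes>\<^sub>M \<mu>)" for n :: nat
  interpret product_prob_space M UNIV
    unfolding M_def by (rule product_prob_space_srrw_coordinates) fact
  define q where "q = (1 - \<alpha>) * measure \<mu> {y. \<epsilon> < y \<bullet> c}"
  have "0 < q"
    unfolding q_def using assms(4) mass by simp
  have push: "srrw_push c \<epsilon> \<in> sets (M n)" "emeasure (M n) (srrw_push c \<epsilon>) = ennreal q" for n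
    unfolding M_def q_def using assms(1-4)
    by (simp_all add: sets_srrw_push emeasure_srrw_push \<mu>.emeasure_eq_measure ennreal_mult)
  let ?F = "\<lambda>i \<omega>. if \<forall>m\<in>{i*K<..i*K+K}. \<omega> m \<in> srrw_push c \<epsilon> then 0 else 1 :: ennreal"
  have [measurable]: "?F i \<in> borel_measurable (PiM UNIV M)" for i
    using push by measurable
  have "(\<integral>\<^sup>+\<omega>. srrw_exit_time R \<omega> \<partial>srrw_space \<alpha> \<mu>) \<le>
      (\<integral>\<^sup>+\<omega>. of_nat K * (\<Sum>j. \<Prod>i<j. ?F i \<omega>) \<partial>PiM UNIV M)"
    unfolding srrw_space_def M_def[symmetric] using assms(5,7)
    by (intro nn_integral_mono srrw_exit_time_le_blocks)
  also have "\<dots> = of_nat K * (\<integral>\<^sup>+\<omega>. (\<Sum>j. \<Prod>i<j. ?F i \<omega>) \<partial>PiM UNIV M)"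
    by (rule nn_integral_cmult) measurable
  also have "\<dots> \<le> of_nat K * ennreal (1 / q ^ K)"
    using push \<open>0 < q\<close>
    by (intro mult_left_mono nn_integral_first_block_le disjoint_family_blocks) (auto simp: ennreal_power)
  finally show ?thesis
    unfolding q_def .
qed

theorem lemma3p13:
  fixes \<mu> :: "'a::euclidean_space measure" and \<alpha> R :: real
  assumes "prob_space \<mu>" and "sets \<mu> = sets borel"
    and "0 \<le> \<alpha>" and "\<alpha> < 1"
    and "\<mu> \<noteq> return borel 0"
    and "R > 0"
  shows "(\<integral>\<^sup>+ \<omega>. srrw_exit_time R \<omega> \<partial>(srrw_space \<alpha> \<mu>)) < \<infinity>"
proof -
  obtain c \<epsilon> where "norm c \<le> 1" and "0 < \<epsilon>" and "0 < measure \<mu> {y. \<epsilon> < y \<bullet> c}"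
    using exists_direction_with_positive_mass assms(1,2,5) by blast
  moreover obtain K :: nat where "2 * R < real K * \<epsilon>"
    using reals_Archimedean3[OF \<open>0 < \<epsilon>\<close>] by blast
  ultimately have "(\<integral>\<^sup>+ \<omega>. srrw_exit_time R \<omega> \<partial>(srrw_space \<alpha> \<mu>)) \<le>
      of_nat K * ennreal (1 / ((1 - \<alpha>) * measure \<mu> {y. \<epsilon> < y \<bullet> c}) ^ K)"
    using assms(1-4) by (intro nn_integral_srrw_exit_time_le)
  also have "\<dots> < \<infinity>"
    by (simp add: ennreal_mult_less_top of_nat_less_top)
  finally show ?thesis .
qed

end
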